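(* Consider a platoon $i$ of CAVs with members $j\in\{0,1,\dots,m_i\}$ ($j=0$ the leader), each obeying $\dot p_{i,j}=v_{i,j}$, $\dot v_{i,j}=u_{i,j}$, subject to $u_{\min}\le u_{i,j}(t)\le u_{\max}$, $0<v_{\min}\le v_{i,j}(t)\le v_{\max}$, and $p_{i,j-1}(t)-p_{i,j}(t)\ge\Delta_i+l_c$ for $j\in\{1,\dots,m_i\}$. Assume that at time $t_i^0$ all members have equal speed and $p_{i,j-1}(t_i^0)-p_{i,j}(t_i^0)-l_c=\Delta_i$. Let $u^*_{i,0}(t)=6a_it+2b_i$, $t\in[t_i^0,t_i^f]$, be the leader's optimal control, whose control and speed trajectories satisfy the control and speed constraints. Then for every follower $j\in\{1,\dots,m_i\}$, the control input $u_{i,j}(t)=u^*_{i,0}(t)$ for all $t\in[t_i^0,t_i^f]$ is energy- and time-optimal (it yields linear control, quadratic speed and cubic position trajectories of the energy-optimal form) and satisfies the control constraint, the speed constraint, and the intra-platoon rear-end safety constraint on $[t_i^0,t_i^f]$.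
   Context: The leader's optimal control is obtained from the leader's problem: the leader uses the unconstrained energy-optimal form $u_i(t)=6a_it+2b_i$, $v_i(t)=3a_it^2+2b_it+c_i$, $p_i(t)=a_it^3+b_it^2+c_it+d_i$ with boundary conditions $p_i(t_i^0)=p_i^0$, $v_i(t_i^0)=v_i^0$, $p_i(t_i^f)=p_i^f$, $u_i(t_i^f)=0$, with minimal exit time $t_i^f$ chosen so that none of the control, speed and safety constraints is violated. $l_c$ is the vehicle length and $\Delta_i$ the prescribed inter-vehicle gap. *)

theory Defs
  imports Complex_Main
begin

end

theory Submission
  imports Defs "HOL-Analysis.Analysis"
begin

text \<open>A follower that starts at the leader's speed and applies the leader's control has zero
  relative acceleration, so its speed coincides with the leader's; the gap to its predecessor
  then has zero derivative and stays at its initial value \<open>\<Delta> + lc\<close>. Hence the follower's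
  trajectory is the leader's cubic one shifted in position, and every constraint is inherited
  from the leader.\<close>

lemma DERIV_same_imp_diff_const:
  fixes f h g :: "real \<Rightarrow> real"
  assumes "convex S"
    and "\<And>x. x \<in> S \<Longrightarrow> (f has_real_derivative g x) (at x within S)"
    and "\<And>x. x \<in> S \<Longrightarrow> (h has_real_derivative g x) (at x within S)"
  shows "\<exists>c. \<forall>x\<in>S. f x = h x + c"
proof -
  have "\<exists>c. \<forall>x\<in>S. f x - h x = c"
  proof (rule has_field_derivative_zero_constant[OF \<open>convex S\<close>])
    fix x assume "x \<in> S"
    from DERIV_diff[OF assms(2,3)[OF this]]
    show "((\<lambda>x. f x - h x) has_field_derivative 0) (at x within S)" by simp
  qed
  then show ?thesis by (metis add.commute diff_add_cancel)
qed

lemma DERIV_same_imp_diff_eq: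
  fixes f h g :: "real \<Rightarrow> real"
  assumes "convex S" and "x0 \<in> S" and "x \<in> S"
    and "\<And>x. x \<in> S \<Longrightarrow> (f has_real_derivative g x) (at x within S)"
    and "\<And>x. x \<in> S \<Longrightarrow> (h has_real_derivative g x) (at x within S)"
  shows "f x - h x = f x0 - h x0"
  using DERIV_same_imp_diff_const[OF assms(1,4,5)] assms(2,3) by force

lemma linear_control_imp_cubic_trajectory:
  fixes p v :: "real \<Rightarrow> real" and a b :: real
  assumes "convex S"
    and dp: "\<And>t. t \<in> S \<Longrightarrow> (p has_real_derivative v t) (at t within S)"
    and dv: "\<And>t. t \<in> S \<Longrightarrow> (v has_real_derivative 6 * a * t + 2 * b) (at t within S)"
  obtains c d where "\<And>t. t \<in> S \<Longrightarrow> v t = 3 * a * t ^ 2 + 2 * b * t + c"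
    and "\<And>t. t \<in> S \<Longrightarrow> p t = a * t ^ 3 + b * t ^ 2 + c * t + d"
proof -
  have "\<exists>c. \<forall>t\<in>S. v t = (3 * a * t ^ 2 + 2 * b * t) + c"
    by (rule DERIV_same_imp_diff_const[OF \<open>convex S\<close> dv])
      (auto intro!: derivative_eq_intros)
  then obtain c where c: "\<And>t. t \<in> S \<Longrightarrow> v t = 3 * a * t ^ 2 + 2 * b * t + c"
    by auto
  have "\<exists>d. \<forall>t\<in>S. p t = (a * t ^ 3 + b * t ^ 2 + c * t) + d"
    by (rule DERIV_same_imp_diff_const[OF \<open>convex S\<close> dp])
      (auto intro!: derivative_eq_intros simp: c)
  with c that show ?thesis by auto
qed

theorem lemma1:
  fixes p v u :: "nat \<Rightarrow> real \<Rightarrow> real"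
    and m :: nat
    and t0 tf a b \<Delta> lc umin umax vmin vmax :: real
  assumes interval: "t0 < tf"
    and vmin_pos: "0 < vmin"
    and dyn_p: "\<And>j t. j \<le> m \<Longrightarrow> t \<in> {t0..tf} \<Longrightarrow>
                  (p j has_real_derivative v j t) (at t within {t0..tf})"
    and dyn_v: "\<And>j t. j \<le> m \<Longrightarrow> t \<in> {t0..tf} \<Longrightarrow>
                  (v j has_real_derivative u j t) (at t within {t0..tf})"
    and leader_u: "\<And>t. t \<in> {t0..tf} \<Longrightarrow> u 0 t = 6 * a * t + 2 * b"
    and leader_u_bounds: "\<And>t. t \<in> {t0..tf} \<Longrightarrow> umin \<le> u 0 t \<and> u 0 t \<le> umax"
    and leader_v_bounds: "\<And>t. t \<in> {t0..tf} \<Longrightarrow> vmin \<le> v 0 t \<and> v 0 t \<le> vmax"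
    and init_speed: "\<And>j. j \<le> m \<Longrightarrow> v j t0 = v 0 t0"
    and init_gap: "\<And>j. 1 \<le> j \<Longrightarrow> j \<le> m \<Longrightarrow> p (j - 1) t0 - p j t0 - lc = \<Delta>"
    and follower_u: "\<And>j t. 1 \<le> j \<Longrightarrow> j \<le> m \<Longrightarrow> t \<in> {t0..tf} \<Longrightarrow> u j t = u 0 t"
  shows "\<forall>j. 1 \<le> j \<and> j \<le> m \<longrightarrow>
           (\<exists>c d. \<forall>t\<in>{t0..tf}.
               u j t = 6 * a * t + 2 * b \<and>
               v j t = 3 * a * t ^ 2 + 2 * b * t + c \<and>
               p j t = a * t ^ 3 + b * t ^ 2 + c * t + d) \<and>
           (\<forall>t\<in>{t0..tf}.
               umin \<le> u j t \<and> u j t \<le> umax \<and>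
               vmin \<le> v j t \<and> v j t \<le> vmax \<and>
               p (j - 1) t - p j t \<ge> \<Delta> + lc)"
proof -
  let ?I = "{t0..tf}"
  have conv: "convex ?I" and t0: "t0 \<in> ?I" using interval by auto
  have u_eq: "u j t = u 0 t" if "j \<le> m" "t \<in> ?I" for j t
    using follower_u that by (cases "j = 0") auto
  have dv: "(v j has_real_derivative u 0 t) (at t within ?I)" if "j \<le> m" "t \<in> ?I" for j t
    using dyn_v[OF that] u_eq[OF that] by simp
  have v_eq: "v j t = v 0 t" if "j \<le> m" "t \<in> ?I" for j t
    using DERIV_same_imp_diff_eq[OF conv t0 \<open>t \<in> ?I\<close> dv[OF \<open>j \<le> m\<close>] dv[of 0]]
      init_speed[OF \<open>j \<le> m\<close>] by simp
  have dp: "(p j has_real_derivative v 0 t) (at t within ?I)" if "j \<le> m" "t \<in> ?I" for j t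
    using dyn_p[OF that] v_eq[OF that] by simp
  have gap_eq: "p (j - 1) t - p j t = \<Delta> + lc" if j: "1 \<le> j" "j \<le> m" and t: "t \<in> ?I" for j t
    using DERIV_same_imp_diff_eq[OF conv t0 t dp[of "j - 1"] dp[of j]] init_gap[OF j] j by simp
  have dv0: "(v 0 has_real_derivative 6 * a * t + 2 * b) (at t within ?I)" if "t \<in> ?I" for t
    using dv[OF le0 that] leader_u[OF that] by simp
  obtain c d where c: "\<And>t. t \<in> ?I \<Longrightarrow> v 0 t = 3 * a * t ^ 2 + 2 * b * t + c"
    and d: "\<And>t. t \<in> ?I \<Longrightarrow> p 0 t = a * t ^ 3 + b * t ^ 2 + c * t + d"
    using linear_control_imp_cubic_trajectory[OF conv dp[OF le0] dv0] by blast
  show ?thesis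
  proof (intro allI impI conjI)
    fix j assume "1 \<le> j \<and> j \<le> m"
    then have j: "1 \<le> j" "j \<le> m" by auto
    have p_eq: "p j t = a * t ^ 3 + b * t ^ 2 + c * t + (d + p j t0 - p 0 t0)" if t: "t \<in> ?I" for t
      using DERIV_same_imp_diff_eq[OF conv t0 t dp[OF j(2)] dp[OF le0]] d[OF t] by simp
    show "\<exists>c d. \<forall>t\<in>?I. u j t = 6 * a * t + 2 * b \<and>
        v j t = 3 * a * t ^ 2 + 2 * b * t + c \<and> p j t = a * t ^ 3 + b * t ^ 2 + c * t + d"
    proof (intro exI ballI conjI)
      fix t assume t: "t \<in> ?I"
      show "u j t = 6 * a * t + 2 * b" using u_eq[OF j(2) t] leader_u[OF t] by simp
      show "v j t = 3 * a * t ^ 2 + 2 * b * t + c" using v_eq[OF j(2) t] c[OF t] by simp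
      show "p j t = a * t ^ 3 + b * t ^ 2 + c * t + (d + p j t0 - p 0 t0)" by (rule p_eq[OF t])
    qed
    show "\<forall>t\<in>?I. umin \<le> u j t \<and> u j t \<le> umax \<and> vmin \<le> v j t \<and> v j t \<le> vmax \<and>
        p (j - 1) t - p j t \<ge> \<Delta> + lc"
      using u_eq[OF j(2)] v_eq[OF j(2)] gap_eq[OF j] leader_u_bounds leader_v_bounds by simp
  qed
qed

end
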